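(* In Minkowski spacetime, every mixed-symmetry Killing tensor $T_{\alpha\beta\gamma}$ is a finite linear combination of tensors of the form $X_{\alpha(\beta}\xi_{\gamma)}$, where each $X_{\alpha\beta}$ is a Killing–Yano tensor and each $\xi_\gamma$ is a Killing vector of Minkowski spacetime.
   Context: A mixed-symmetry Killing tensor is a rank-3 tensor field $T_{\alpha\beta\gamma}=N_{\alpha(\beta\gamma)}$ for some $N_{\alpha\beta\gamma}=N_{[\alpha\beta]\gamma}$, satisfying $\nabla_{(\delta}T_{|\alpha|\beta\gamma)}=0$ (written $T_{\alpha(\beta\gamma;\delta)}=0$). A Killing–Yano tensor is $X_{\mu\nu}=X_{[\mu\nu]}$ with $\nabla_{(\alpha}X_{\beta)\gamma}=0$; a Killing vector satisfies $\nabla_{(\alpha}\xi_{\beta)}=0$. Symmetrizations carry weight $1/n!$. *)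

theory Defs
  imports "HOL-Analysis.Analysis"
begin

text \<open>Minkowski spacetime in global inertial (Cartesian) coordinates: points are
  vectors in real^4, tensor indices range over the 4-element type 4.  In these
  coordinates the Levi-Civita connection of the flat metric diag(-1,1,1,1) has
  vanishing Christoffel symbols, so the covariant derivative of a covariant tensor
  field is componentwise the partial derivative.\<close>

type_synonym point = "real ^ 4"
type_synonym idx = "4"

definition pd :: "idx \<Rightarrow> (point \<Rightarrow> real) \<Rightarrow> point \<Rightarrow> real" where
  "pd d f x = deriv (\<lambda>t. f (x + t *\<^sub>R axis d 1)) 0"

definition iter_pd :: "idx list \<Rightarrow> (point \<Rightarrow> real) \<Rightarrow> point \<Rightarrow> real" where
  "iter_pd ds f = foldr pd ds f"

definition smooth_fun :: "(point \<Rightarrow> real) \<Rightarrow> bool" where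
  "smooth_fun f \<longleftrightarrow> (\<forall>ds x. iter_pd ds f differentiable (at x))"

definition smooth1 :: "(point \<Rightarrow> idx \<Rightarrow> real) \<Rightarrow> bool" where
  "smooth1 v \<longleftrightarrow> (\<forall>a. smooth_fun (\<lambda>x. v x a))"

definition smooth2 :: "(point \<Rightarrow> idx \<Rightarrow> idx \<Rightarrow> real) \<Rightarrow> bool" where
  "smooth2 X \<longleftrightarrow> (\<forall>a b. smooth_fun (\<lambda>x. X x a b))"

definition smooth3 :: "(point \<Rightarrow> idx \<Rightarrow> idx \<Rightarrow> idx \<Rightarrow> real) \<Rightarrow> bool" where
  "smooth3 T \<longleftrightarrow> (\<forall>a b c. smooth_fun (\<lambda>x. T x a b c))"

definition killing_vector :: "(point \<Rightarrow> idx \<Rightarrow> real) \<Rightarrow> bool" where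
  "killing_vector \<xi> \<longleftrightarrow> smooth1 \<xi> \<and>
     (\<forall>x a b. (pd a (\<lambda>y. \<xi> y b) x + pd b (\<lambda>y. \<xi> y a) x) / 2 = 0)"

definition killing_yano :: "(point \<Rightarrow> idx \<Rightarrow> idx \<Rightarrow> real) \<Rightarrow> bool" where
  "killing_yano X \<longleftrightarrow> smooth2 X \<and>
     (\<forall>x a b. X x a b = - X x b a) \<and>
     (\<forall>x a b c. (pd a (\<lambda>y. X y b c) x + pd b (\<lambda>y. X y a c) x) / 2 = 0)"

definition mixed_killing :: "(point \<Rightarrow> idx \<Rightarrow> idx \<Rightarrow> idx \<Rightarrow> real) \<Rightarrow> bool" where
  "mixed_killing T \<longleftrightarrow> smooth3 T \<and>
     (\<exists>N. smooth3 N \<and> (\<forall>x a b c. N x a b c = - N x b a c) \<and>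
          (\<forall>x a b c. T x a b c = (N x a b c + N x a c b) / 2)) \<and>
     (\<forall>x a b c d.
        (pd d (\<lambda>y. T y a b c) x + pd b (\<lambda>y. T y a c d) x + pd c (\<lambda>y. T y a d b) x
       + pd d (\<lambda>y. T y a c b) x + pd c (\<lambda>y. T y a b d) x + pd b (\<lambda>y. T y a d c) x) / 6 = 0)"

end

(*
  In inertial coordinates the Killing equation T_{a(bc,d)} = 0, together with T_{abc} = T_{acb}
  and the cyclic identity T_{abc} + T_{bca} + T_{cab} = 0 inherited from N, forces every third
  partial derivative of T to vanish, so T is a quadratic polynomial in x.  Each homogeneous part
  is then an explicit finite sum of products X_{a(b} xi_{c)}: the constant part uses constant
  Killing-Yano tensors and translations, the linear part constant Killing-Yano tensors and
  rotations x_r e_s - x_s e_r, and the quadratic part Killing-Yano tensors linear in x and rotations.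
*)

theory Submission
  imports Defs
begin

lemma has_real_derivative_along_line:
  fixes f :: "point \<Rightarrow> real"
  assumes "(f has_derivative f') (at (x + s *\<^sub>R v))"
  shows "((\<lambda>t. f (x + t *\<^sub>R v)) has_real_derivative f' v) (at s)"
proof -
  have line: "((\<lambda>t. x + t *\<^sub>R v) has_derivative (\<lambda>h. h *\<^sub>R v)) (at s)"
    by (auto intro!: derivative_eq_intros)
  have "((\<lambda>t. f (x + t *\<^sub>R v)) has_derivative (\<lambda>h. f' (h *\<^sub>R v))) (at s)"
    using has_derivative_compose[OF line assms] by (simp add: o_def)
  moreover have "(\<lambda>h. f' (h *\<^sub>R v)) = (*) (f' v)"
    using linear_scale[OF has_derivative_linear[OF assms]] by (auto simp: fun_eq_iff)
  ultimately show ?thesis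
    unfolding has_field_derivative_def by simp
qed

lemma pd_eq_derivative:
  assumes "(f has_derivative f') (at x)"
  shows "pd d f x = f' (axis d 1)"
  unfolding pd_def
  by (rule DERIV_imp_deriv, rule has_real_derivative_along_line) (use assms in simp)

lemma has_real_derivative_pd_along_axis:
  assumes "f differentiable (at (x + s *\<^sub>R axis d 1))"
  shows "((\<lambda>t. f (x + t *\<^sub>R axis d 1)) has_real_derivative pd d f (x + s *\<^sub>R axis d 1)) (at s)"
proof -
  obtain f' where "(f has_derivative f') (at (x + s *\<^sub>R axis d 1))"
    using assms unfolding differentiable_def by blast
  then show ?thesis
    using has_real_derivative_along_line pd_eq_derivative by simp
qed

lemma smooth_fun_pd:
  assumes "smooth_fun f"
  shows "smooth_fun (pd d f)"
proof -
  have "iter_pd ds (pd d f) = iter_pd (ds @ [d]) f" for ds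
    by (simp add: iter_pd_def)
  with assms show ?thesis
    unfolding smooth_fun_def by simp
qed

lemma smooth_fun_differentiable: "smooth_fun f \<Longrightarrow> f differentiable (at x)"
  unfolding smooth_fun_def iter_pd_def by (metis foldr.simps(1) id_apply)

lemma pd_add:
  assumes "f differentiable (at x)" "g differentiable (at x)"
  shows "pd d (\<lambda>y. f y + g y) x = pd d f x + pd d g x"
proof -
  obtain f' g' where "(f has_derivative f') (at x)" "(g has_derivative g') (at x)"
    using assms unfolding differentiable_def by blast
  then show ?thesis
    using pd_eq_derivative[OF has_derivative_add] pd_eq_derivative by simp
qed

lemma pd_diff:
  assumes "f differentiable (at x)" "g differentiable (at x)"
  shows "pd d (\<lambda>y. f y - g y) x = pd d f x - pd d g x"
proof -
  obtain f' g' where "(f has_derivative f') (at x)" "(g has_derivative g') (at x)"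
    using assms unfolding differentiable_def by blast
  then show ?thesis
    using pd_eq_derivative[OF has_derivative_diff] pd_eq_derivative by simp
qed

lemma pd_const: "pd d (\<lambda>y. c) x = 0"
  using pd_eq_derivative[OF has_derivative_const] by simp

lemma pd_sum3_eq_0:
  assumes "smooth_fun f" "smooth_fun g" "smooth_fun h" "\<And>y. f y + g y + h y = 0"
  shows "pd d f x + pd d g x + pd d h x = 0"
proof -
  have "pd d (\<lambda>y. (f y + g y) + h y) x = pd d f x + pd d g x + pd d h x"
    using assms(1-3)
    by (simp add: pd_add differentiable_add smooth_fun_differentiable)
  moreover have "pd d (\<lambda>y. f y + g y + h y) x = 0"
    using pd_const[of d 0 x] by (simp add: assms(4))
  ultimately show ?thesis by simp
qed

lemma pd_eq_0_imp_constant: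
  fixes f :: "point \<Rightarrow> real"
  assumes "\<And>x. f differentiable (at x)" and "\<And>d x. pd d f x = 0"
  shows "f x = f y"
proof -
  have "(f has_derivative (\<lambda>h. 0)) (at x within UNIV)" for x
  proof -
    obtain f' where f': "(f has_derivative f') (at x)"
      using assms(1) unfolding differentiable_def by blast
    have "f' = (\<lambda>h. 0)"
    proof (rule linear_eq_stdbasis)
      show "linear f'" using f' has_derivative_linear by blast
      fix b :: point assume "b \<in> Basis"
      then obtain i where "b = axis i 1" by (auto simp: Basis_vec_def)
      then show "f' b = 0" using pd_eq_derivative[OF f', of i] assms(2) by simp
    qed (simp add: linear_zero)
    then show ?thesis using f' by simp
  qed
  then obtain c where "\<forall>x\<in>UNIV. f x = c"
    using has_derivative_zero_constant[of UNIV f] by auto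
  then show ?thesis by simp
qed

lemma second_difference_mvt:
  assumes f: "smooth_fun f" and h: "h > 0"
  obtains p where "dist p x < 2 * h"
    "f (x + h *\<^sub>R axis j 1 + h *\<^sub>R axis i 1) - f (x + h *\<^sub>R axis i 1) - f (x + h *\<^sub>R axis j 1) + f x
       = h * h * pd j (pd i f) p"
proof -
  define u where "u = axis i (1::real)"
  define v where "v = axis j (1::real)"
  define \<phi> where "\<phi> \<sigma> = f (x + h *\<^sub>R v + \<sigma> *\<^sub>R u) - f (x + \<sigma> *\<^sub>R u)" for \<sigma>
  define \<phi>' where "\<phi>' \<sigma> = pd i f (x + h *\<^sub>R v + \<sigma> *\<^sub>R u) - pd i f (x + \<sigma> *\<^sub>R u)" for \<sigma>
  have "(\<phi> has_real_derivative \<phi>' \<sigma>) (at \<sigma>)" for \<sigma>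
    unfolding \<phi>_def \<phi>'_def u_def
    by (intro DERIV_diff has_real_derivative_pd_along_axis smooth_fun_differentiable[OF f])
  then obtain s where s: "0 < s" "s < h" "\<phi> h - \<phi> 0 = h * \<phi>' s"
    using MVT2[OF h, of \<phi> \<phi>'] by auto
  define \<psi> where "\<psi> \<tau> = pd i f (x + s *\<^sub>R u + \<tau> *\<^sub>R v)" for \<tau>
  define \<psi>' where "\<psi>' \<tau> = pd j (pd i f) (x + s *\<^sub>R u + \<tau> *\<^sub>R v)" for \<tau>
  have "(\<psi> has_real_derivative \<psi>' \<tau>) (at \<tau>)" for \<tau>
    unfolding \<psi>_def \<psi>'_def v_def
    by (intro has_real_derivative_pd_along_axis smooth_fun_differentiable smooth_fun_pd f)
  then obtain t where t: "0 < t" "t < h" "\<psi> h - \<psi> 0 = h * \<psi>' t"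
    using MVT2[OF h, of \<psi> \<psi>'] by auto
  have "dist (x + s *\<^sub>R u + t *\<^sub>R v) x \<le> norm (s *\<^sub>R u) + norm (t *\<^sub>R v)"
    unfolding dist_norm by (simp add: norm_triangle_ineq del: norm_scaleR)
  also have "\<dots> = s + t"
    using s t by (simp add: u_def v_def)
  finally have near: "dist (x + s *\<^sub>R u + t *\<^sub>R v) x < 2 * h"
    using s t by linarith
  have "\<phi>' s = \<psi> h - \<psi> 0"
    unfolding \<phi>'_def \<psi>_def by (simp add: algebra_simps)
  then have "\<phi> h - \<phi> 0 = h * h * \<psi>' t"
    using s(3) t(3) by simp
  then show thesis
    using that[OF near] unfolding \<phi>_def \<psi>'_def u_def v_def by simp
qed

text \<open>Schwarz: the mixed second difference is a value of either mixed partial near x, so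
  continuity forces the two partials to agree at x.\<close>
lemma pd_commute:
  assumes f: "smooth_fun f"
  shows "pd i (pd j f) x = pd j (pd i f) x"
proof (rule ccontr)
  define G where "G = pd j (pd i f)"
  define H where "H = pd i (pd j f)"
  define \<epsilon> where "\<epsilon> = \<bar>G x - H x\<bar> / 2"
  assume "pd i (pd j f) x \<noteq> pd j (pd i f) x"
  then have "\<epsilon> > 0"
    unfolding \<epsilon>_def G_def H_def by auto
  moreover have "isCont G x" "isCont H x"
    unfolding G_def H_def
    by (simp_all add: differentiable_imp_continuous_within smooth_fun_differentiable smooth_fun_pd f)
  ultimately obtain \<delta>G \<delta>H where \<delta>: "\<delta>G > 0" "\<delta>H > 0"
    "\<And>y. dist y x < \<delta>G \<Longrightarrow> dist (G y) (G x) < \<epsilon>"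
    "\<And>y. dist y x < \<delta>H \<Longrightarrow> dist (H y) (H x) < \<epsilon>"
    unfolding continuous_at_eps_delta by blast
  define h where "h = min \<delta>G \<delta>H / 2"
  have h: "h > 0" using \<delta> unfolding h_def by auto
  obtain p where p: "dist p x < 2 * h"
     "f (x + h *\<^sub>R axis j 1 + h *\<^sub>R axis i 1) - f (x + h *\<^sub>R axis i 1) - f (x + h *\<^sub>R axis j 1) + f x
       = h * h * G p"
    using second_difference_mvt[OF f h] unfolding G_def .
  obtain q where q: "dist q x < 2 * h"
     "f (x + h *\<^sub>R axis i 1 + h *\<^sub>R axis j 1) - f (x + h *\<^sub>R axis j 1) - f (x + h *\<^sub>R axis i 1) + f x
       = h * h * H q"
    using second_difference_mvt[OF f h] unfolding H_def .
  have "f (x + h *\<^sub>R axis i 1 + h *\<^sub>R axis j 1) = f (x + h *\<^sub>R axis j 1 + h *\<^sub>R axis i 1)"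
    by (simp add: algebra_simps)
  then have "h * h * G p = h * h * H q"
    using p(2) q(2) by linarith
  then have "G p = H q"
    using h by simp
  moreover have "dist (G p) (G x) < \<epsilon>" "dist (H q) (H x) < \<epsilon>"
    using \<delta>(3,4) p(1) q(1) unfolding h_def by auto
  ultimately show False
    unfolding \<epsilon>_def dist_real_def by (simp add: abs_if split: if_splits)
qed

text \<open>After sorting the symmetric index groups, the ten cyclic relations below form a
  nonsingular linear system in the ten distinct components.\<close>
lemma cyclic_sym_tensor_eq_0:
  fixes D :: "'i \<Rightarrow> 'i \<Rightarrow> 'i \<Rightarrow> 'i \<Rightarrow> 'i \<Rightarrow> real"
  assumes s1: "\<And>b c d e f. D b c d e f = D c b d e f"
    and s2: "\<And>b c d e f. D b c d e f = D b c e d f"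
    and s3: "\<And>b c d e f. D b c d e f = D b c d f e"
    and cyc: "\<And>b c d e f. D b c d e f + D c d b e f + D d b c e f = 0"
  shows "D b c d e f = 0"
  using cyc[of b c d e f] cyc[of b c e d f] cyc[of b c f d e] cyc[of b d e c f] cyc[of b d f c e]
    cyc[of b e f c d] cyc[of c d e b f] cyc[of c d f b e] cyc[of c e f b d] cyc[of d e f b c]
  by (simp only: s1 s2 s3; linarith)

text \<open>The coefficient tensors below are explicit solutions of linear systems: given a tensor
  with the symmetries of the corresponding Taylor coefficient of T, they provide Killing-Yano
  coefficients (antisymmetric in the Killing-Yano indices and in the index pair labelling a
  rotation) whose symmetrized products give back that tensor.\<close>

definition const_ky_coeff :: "('i \<Rightarrow> 'i \<Rightarrow> 'i \<Rightarrow> real) \<Rightarrow> 'i \<Rightarrow> 'i \<Rightarrow> 'i \<Rightarrow> real" where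
  "const_ky_coeff C a b c = 2 / 3 * (C a b c - C b a c)"

lemma const_ky_coeff_antisym: "const_ky_coeff C a b c = - const_ky_coeff C b a c"
  unfolding const_ky_coeff_def by (simp add: field_simps)

lemma const_ky_coeff_sym_part:
  fixes C :: "'i \<Rightarrow> 'i \<Rightarrow> 'i \<Rightarrow> real"
  assumes sym: "\<And>a b c. C a b c = C a c b"
    and cyc: "\<And>a b c. C a b c + C b c a + C c a b = 0"
  shows "(const_ky_coeff C a b c + const_ky_coeff C a c b) / 2 = C a b c"
  using cyc[of a b c] unfolding const_ky_coeff_def by (simp only: sym) (simp add: field_simps)

definition lin_ky_seed :: "('i \<Rightarrow> 'i \<Rightarrow> 'i \<Rightarrow> 'i \<Rightarrow> real) \<Rightarrow> 'i \<Rightarrow> 'i \<Rightarrow> 'i \<Rightarrow> 'i \<Rightarrow> real" where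
  "lin_ky_seed P a b c d =
     2/3 * P a b c d + P a c b d - 1/3 * P a c d b + 1/3 * P c a b d - 1/3 * P c a d b"

definition lin_ky_coeff :: "('i \<Rightarrow> 'i \<Rightarrow> 'i \<Rightarrow> 'i \<Rightarrow> real) \<Rightarrow> 'i \<Rightarrow> 'i \<Rightarrow> 'i \<Rightarrow> 'i \<Rightarrow> real" where
  "lin_ky_coeff P a b c d =
     (lin_ky_seed P a b c d - lin_ky_seed P b a c d - lin_ky_seed P a b d c + lin_ky_seed P b a d c) / 4"

lemma lin_ky_coeff_antisym:
  "lin_ky_coeff P a b c d = - lin_ky_coeff P b a c d"
  "lin_ky_coeff P a b c d = - lin_ky_coeff P a b d c"
  unfolding lin_ky_coeff_def by (simp_all add: field_simps)

lemma lin_ky_coeff_sym_part: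
  fixes P :: "'i \<Rightarrow> 'i \<Rightarrow> 'i \<Rightarrow> 'i \<Rightarrow> real"
  assumes sym: "\<And>a b c d. P a b c d = P a c b d"
    and cyc: "\<And>a b c d. P a b c d + P b c a d + P c a b d = 0"
    and killing: "\<And>a b c d. P a b c d + P a c d b + P a d b c = 0"
  shows "(lin_ky_coeff P a b c d + lin_ky_coeff P a c b d) / 2 = P a b c d"
  using cyc[of a b c d] cyc[of a b d c] cyc[of a c d b] cyc[of b c d a]
    killing[of a b c d] killing[of b a c d] killing[of c a b d]
  unfolding lin_ky_coeff_def lin_ky_seed_def by (simp only: sym) (simp add: field_simps; linarith)

definition quad_ky_seed :: "('i \<Rightarrow> 'i \<Rightarrow> 'i \<Rightarrow> 'i \<Rightarrow> 'i \<Rightarrow> real) \<Rightarrow> 'i \<Rightarrow> 'i \<Rightarrow> 'i \<Rightarrow> 'i \<Rightarrow> 'i \<Rightarrow> real" where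
  "quad_ky_seed Q a b e c d =
     8 * Q a b c e d - 4 * Q a b e c d + 2 * Q a c b e d - 4 * Q a c b d e - 4 * Q a b c d e"

definition quad_ky_coeff :: "('i \<Rightarrow> 'i \<Rightarrow> 'i \<Rightarrow> 'i \<Rightarrow> 'i \<Rightarrow> real) \<Rightarrow> 'i \<Rightarrow> 'i \<Rightarrow> 'i \<Rightarrow> 'i \<Rightarrow> 'i \<Rightarrow> real" where
  "quad_ky_coeff Q a b e c d =
     (let S = (\<lambda>x y z. quad_ky_seed Q x y z c d - quad_ky_seed Q x y z d c)
      in (S a b e - S b a e - S a e b - S e b a + S b e a + S e a b) / 12)"

lemma quad_ky_coeff_antisym:
  "quad_ky_coeff Q a b e c d = - quad_ky_coeff Q b a e c d"
  "quad_ky_coeff Q a b e c d = - quad_ky_coeff Q a e b c d"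
  "quad_ky_coeff Q a b e c d = - quad_ky_coeff Q a b e d c"
  unfolding quad_ky_coeff_def Let_def by (simp_all add: field_simps)

lemma quad_ky_coeff_sym_part:
  fixes Q :: "'i \<Rightarrow> 'i \<Rightarrow> 'i \<Rightarrow> 'i \<Rightarrow> 'i \<Rightarrow> real"
  assumes sym1: "\<And>a b c d e. Q a b c d e = Q a c b d e"
    and sym2: "\<And>a b c d e. Q a b c d e = Q a b c e d"
    and cyc: "\<And>a b c d e. Q a b c d e + Q b c a d e + Q c a b d e = 0"
    and killing: "\<And>a b c d e. Q a b c d e + Q a c d b e + Q a d b c e = 0"
  shows "(quad_ky_coeff Q a b e c d + quad_ky_coeff Q a b d c e
        + quad_ky_coeff Q a c e b d + quad_ky_coeff Q a c d b e) / 4 = Q a b c d e"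
  using cyc[of a b c d e] cyc[of a b d c e] cyc[of a b e c d] cyc[of a c d b e] cyc[of a c e b d]
    cyc[of b c d a e] cyc[of a d e b c] cyc[of b c e a d] cyc[of b d e a c] cyc[of c d e a b]
    killing[of a b c d e] killing[of a b c e d] killing[of a b d e c] killing[of a c d e b]
    killing[of b a c d e] killing[of b a c e d] killing[of b a d e c] killing[of c a d e b]
    killing[of c a b d e] killing[of c a b e d]
  unfolding quad_ky_coeff_def quad_ky_seed_def Let_def
  by (simp only: sym1 sym2) (simp add: field_simps; linarith)

definition poly2 :: "real \<Rightarrow> (idx \<Rightarrow> real) \<Rightarrow> (idx \<Rightarrow> idx \<Rightarrow> real) \<Rightarrow> point \<Rightarrow> real" where
  "poly2 a b c y = a + (\<Sum>j\<in>UNIV. b j * y $ j) + (\<Sum>j\<in>UNIV. \<Sum>k\<in>UNIV. c j k * (y $ j * y $ k))"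

lemma poly2_has_derivative:
  "(poly2 a b c has_derivative (\<lambda>h. (\<Sum>j\<in>UNIV. b j * h $ j)
     + (\<Sum>j\<in>UNIV. \<Sum>k\<in>UNIV. c j k * (x $ j * h $ k + h $ j * x $ k)))) (at x)"
  unfolding poly2_def
  by (rule derivative_eq_intros has_derivative_sum bounded_linear_imp_has_derivative
      bounded_linear_vec_nth | simp)+

lemma poly2_differentiable: "poly2 a b c differentiable (at x)"
  using poly2_has_derivative unfolding differentiable_def by blast

lemma sum_mult_axis: "(\<Sum>k\<in>UNIV. f k * axis i (1::real) $ k) = f i"
proof -
  have "f k * axis i 1 $ k = (if i = k then f k else 0)" for k
    by (simp add: axis_def)
  then show ?thesis by simp
qed

lemma pd_poly2: "pd i (poly2 a b c) x = b i + (\<Sum>k\<in>UNIV. (c i k + c k i) * x $ k)"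
proof -
  have "(\<Sum>k\<in>UNIV. c j k * (x $ j * axis i 1 $ k + axis i 1 $ j * x $ k))
      = c j i * x $ j + (\<Sum>k\<in>UNIV. c j k * x $ k) * axis i 1 $ j" for j
    using sum_mult_axis[of "\<lambda>k. c j k * x $ j" i]
    by (simp add: distrib_left sum.distrib sum_distrib_left sum_distrib_right ac_simps)
  then have "(\<Sum>j\<in>UNIV. \<Sum>k\<in>UNIV. c j k * (x $ j * axis i 1 $ k + axis i 1 $ j * x $ k))
      = (\<Sum>j\<in>UNIV. c j i * x $ j) + (\<Sum>k\<in>UNIV. c i k * x $ k)"
    using sum_mult_axis[of "\<lambda>j. \<Sum>k\<in>UNIV. c j k * x $ k" i] by (simp add: sum.distrib)
  then show ?thesis
    unfolding pd_eq_derivative[OF poly2_has_derivative] sum_mult_axis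
    by (simp add: distrib_right sum.distrib)
qed

lemma pd_poly2_eq_poly2: "pd i (poly2 a b c) = poly2 (b i) (\<lambda>k. c i k + c k i) (\<lambda>_ _. 0)"
  by (rule ext) (simp add: pd_poly2 poly2_def)

lemma smooth_fun_poly2: "smooth_fun (poly2 a b c)"
proof -
  have "\<exists>a' b' c'. iter_pd ds (poly2 a b c) = poly2 a' b' c'" for ds
  proof (induction ds)
    case Nil
    then show ?case by (auto simp: iter_pd_def)
  next
    case (Cons d ds)
    then obtain a' b' c' where "iter_pd ds (poly2 a b c) = poly2 a' b' c'"
      by blast
    then show ?case
      by (auto simp: iter_pd_def pd_poly2_eq_poly2)
  qed
  then show ?thesis
    unfolding smooth_fun_def using poly2_differentiable by (metis (no_types))
qed

lemma linear_form_eq_poly2: "(\<lambda>x. \<Sum>k\<in>UNIV. b k * x $ k) = poly2 0 b (\<lambda>_ _. 0)"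
  by (rule ext) (simp add: poly2_def)

lemma smooth_fun_linear_form: "smooth_fun (\<lambda>x. \<Sum>k\<in>UNIV. b k * x $ k)"
  unfolding linear_form_eq_poly2 by (rule smooth_fun_poly2)

lemma pd_linear_form: "pd i (\<lambda>x. \<Sum>k\<in>UNIV. b k * x $ k) x = b i"
  unfolding linear_form_eq_poly2 by (simp add: pd_poly2)

lemma smooth_fun_const: "smooth_fun (\<lambda>x. a)"
proof -
  have "(\<lambda>x. a) = poly2 a (\<lambda>_. 0) (\<lambda>_ _. 0)"
    by (rule ext) (simp add: poly2_def)
  then show ?thesis by (simp add: smooth_fun_poly2)
qed

lemma eq_if_pd_eq:
  fixes f g :: "point \<Rightarrow> real"
  assumes "\<And>x. f differentiable (at x)" "\<And>x. g differentiable (at x)"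
    and "\<And>d x. pd d f x = pd d g x" and "f 0 = g 0"
  shows "f x = g x"
proof -
  have "f x - g x = f 0 - g 0"
    by (rule pd_eq_0_imp_constant[where f = "\<lambda>x. f x - g x"])
      (simp_all add: assms differentiable_diff pd_diff)
  then show ?thesis using assms(4) by simp
qed

lemma poly2_if_third_pd_eq_0:
  assumes f: "smooth_fun f" and third: "\<And>i j k x. pd i (pd j (pd k f)) x = 0"
  shows "f x = poly2 (f 0) (\<lambda>k. pd k f 0) (\<lambda>j k. pd j (pd k f) 0 / 2) x"
proof -
  define B where "B k = pd k f 0" for k
  define C where "C j k = pd j (pd k f) 0" for j k
  have f': "smooth_fun (pd k f)" "smooth_fun (pd j (pd k f))" for j k
    by (simp_all add: smooth_fun_pd f)
  have second: "pd j (pd k f) y = C j k" for j k y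
    unfolding C_def
    by (rule pd_eq_0_imp_constant) (simp_all add: third smooth_fun_differentiable f')
  have first: "pd k f y = poly2 (B k) (\<lambda>j. C j k) (\<lambda>_ _. 0) y" for k y
    by (rule eq_if_pd_eq[OF smooth_fun_differentiable[OF f'(1)] poly2_differentiable])
      (simp_all add: pd_poly2 second poly2_def B_def)
  have C_sym: "C d k / 2 + C k d / 2 = C k d" for d k
    using pd_commute[OF f, of d k 0] unfolding C_def by simp
  have grad: "pd d f y = pd d (poly2 (f 0) B (\<lambda>j k. C j k / 2)) y" for d y
  proof -
    have "pd d (poly2 (f 0) B (\<lambda>j k. C j k / 2)) y
        = B d + (\<Sum>k\<in>UNIV. (C d k / 2 + C k d / 2) * y $ k)"
      by (rule pd_poly2)
    also have "\<dots> = pd d f y"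
      unfolding C_sym first by (simp add: poly2_def)
    finally show ?thesis ..
  qed
  have "f x = poly2 (f 0) B (\<lambda>j k. C j k / 2) x"
    by (rule eq_if_pd_eq[OF smooth_fun_differentiable[OF f] poly2_differentiable grad])
      (simp add: poly2_def)
  then show ?thesis
    unfolding B_def[abs_def] C_def .
qed

definition rotation :: "idx \<Rightarrow> idx \<Rightarrow> point \<Rightarrow> idx \<Rightarrow> real" where
  "rotation r s x c = (if c = r then x $ s else 0) - (if c = s then x $ r else 0)"

lemma rotation_eq_linear_form:
  "rotation r s x c = (\<Sum>k\<in>UNIV. (of_bool (c = r \<and> k = s) - of_bool (c = s \<and> k = r)) * x $ k)"
  by (simp add: rotation_def left_diff_distrib sum_subtractf)

lemma killing_vector_const: "killing_vector (\<lambda>x. v)"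
  unfolding killing_vector_def smooth1_def by (simp add: smooth_fun_const pd_const)

lemma smooth_fun_rotation: "smooth_fun (\<lambda>x. rotation r s x c)"
  unfolding rotation_eq_linear_form by (rule smooth_fun_linear_form)

lemma pd_rotation:
  "pd a (\<lambda>x. rotation r s x c) y = of_bool (c = r \<and> a = s) - of_bool (c = s \<and> a = r)"
  unfolding rotation_eq_linear_form by (rule pd_linear_form)

lemma killing_vector_rotation: "killing_vector (rotation r s)"
  unfolding killing_vector_def smooth1_def
proof (intro conjI allI)
  fix x a b
  show "(pd a (\<lambda>y. rotation r s y b) x + pd b (\<lambda>y. rotation r s y a) x) / 2 = 0"
    unfolding pd_rotation by (cases "a = r"; cases "a = s"; cases "b = r"; cases "b = s") simp_all
qed (rule smooth_fun_rotation)

lemma killing_yano_const: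
  assumes "\<And>a b. A a b = - A b a"
  shows "killing_yano (\<lambda>x. A)"
  unfolding killing_yano_def smooth2_def
  by (intro conjI allI smooth_fun_const assms) (simp add: pd_const)

lemma killing_yano_linear:
  assumes antisym12: "\<And>a b e. B a b e = - B b a e" and antisym23: "\<And>a b e. B a b e = - B a e b"
  shows "killing_yano (\<lambda>x a b. \<Sum>e\<in>UNIV. B a b e * x $ e)"
  unfolding killing_yano_def smooth2_def
proof (intro conjI allI)
  fix x :: point and a b c
  show "(\<Sum>e\<in>UNIV. B a b e * x $ e) = - (\<Sum>e\<in>UNIV. B b a e * x $ e)"
    using antisym12[of a b] by (simp add: sum_negf)
  have "B b c a = - B a c b"
    using antisym12[of b c a] antisym23[of c b a] antisym12[of a c b] by simp
  then show "(pd a (\<lambda>y. \<Sum>e\<in>UNIV. B b c e * y $ e) x + pd b (\<lambda>y. \<Sum>e\<in>UNIV. B a c e * y $ e) x) / 2 = 0"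
    by (simp add: pd_linear_form)
qed (rule smooth_fun_linear_form)

definition sym_product ::
    "(point \<Rightarrow> idx \<Rightarrow> idx \<Rightarrow> real) \<Rightarrow> (point \<Rightarrow> idx \<Rightarrow> real) \<Rightarrow> point \<Rightarrow> idx \<Rightarrow> idx \<Rightarrow> idx \<Rightarrow> real"
  where "sym_product X \<xi> x a b c = (X x a b * \<xi> x c + X x a c * \<xi> x b) / 2"

definition ky_kv_span :: "(point \<Rightarrow> idx \<Rightarrow> idx \<Rightarrow> idx \<Rightarrow> real) \<Rightarrow> bool" where
  "ky_kv_span T \<longleftrightarrow> (\<exists>(m::nat) (c::nat \<Rightarrow> real) X \<xi>.
     (\<forall>i<m. killing_yano (X i) \<and> killing_vector (\<xi> i)) \<and>
     (\<forall>x a b g. T x a b g = (\<Sum>i<m. c i * sym_product (X i) (\<xi> i) x a b g)))"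

lemma ky_kv_span_zero: "ky_kv_span (\<lambda>x a b g. 0)"
  unfolding ky_kv_span_def by (rule exI[of _ 0]) simp

lemma ky_kv_span_add_sym_product:
  assumes "ky_kv_span T" "killing_yano Y" "killing_vector \<eta>"
  shows "ky_kv_span (\<lambda>x a b g. T x a b g + k * sym_product Y \<eta> x a b g)"
proof -
  obtain m :: nat and c X \<xi> where
    ky_kv: "\<forall>i<m. killing_yano (X i) \<and> killing_vector (\<xi> i)" and
    T: "\<forall>x a b g. T x a b g = (\<Sum>i<m. c i * sym_product (X i) (\<xi> i) x a b g)"
    using assms(1) unfolding ky_kv_span_def by blast
  have "(\<Sum>i<m. (c(m := k)) i * sym_product ((X(m := Y)) i) ((\<xi>(m := \<eta>)) i) x a b g)
      = (\<Sum>i<m. c i * sym_product (X i) (\<xi> i) x a b g)" for x a b g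
    by (rule sum.cong) auto
  then show ?thesis
    unfolding ky_kv_span_def using ky_kv T assms(2,3)
    by (intro exI[of _ "Suc m"] exI[of _ "c(m := k)"] exI[of _ "X(m := Y)"] exI[of _ "\<xi>(m := \<eta>)"])
      (auto simp: less_Suc_eq)
qed

lemma ky_kv_span_add:
  assumes "ky_kv_span T" "ky_kv_span T'"
  shows "ky_kv_span (\<lambda>x a b g. T x a b g + T' x a b g)"
proof -
  obtain m :: nat and c X \<xi> where
    ky_kv: "\<forall>i<m. killing_yano (X i) \<and> killing_vector (\<xi> i)" and
    T': "\<forall>x a b g. T' x a b g = (\<Sum>i<m. c i * sym_product (X i) (\<xi> i) x a b g)"
    using assms(2) unfolding ky_kv_span_def by blast
  have "n \<le> m \<Longrightarrow>
      ky_kv_span (\<lambda>x a b g. T x a b g + (\<Sum>i<n. c i * sym_product (X i) (\<xi> i) x a b g))" for n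
  proof (induction n)
    case 0
    then show ?case using assms(1) by simp
  next
    case (Suc n)
    then show ?case
      using ky_kv_span_add_sym_product[OF Suc.IH, of "X n" "\<xi> n" "c n"] ky_kv
      by (simp add: add.assoc)
  qed
  then show ?thesis
    using T' by simp
qed

lemma ky_kv_span_sum:
  assumes "finite A" "\<And>i. i \<in> A \<Longrightarrow> ky_kv_span (T i)"
  shows "ky_kv_span (\<lambda>x a b g. \<Sum>i\<in>A. T i x a b g)"
  using assms
proof (induction A rule: finite_induct)
  case empty
  then show ?case by (simp add: ky_kv_span_zero)
next
  case (insert i A)
  then show ?case
    using ky_kv_span_add[of "T i" "\<lambda>x a b g. \<Sum>i\<in>A. T i x a b g"] by simp
qed

lemma ky_kv_span_sym_product:
  "killing_yano X \<Longrightarrow> killing_vector \<xi> \<Longrightarrow> ky_kv_span (sym_product X \<xi>)"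
  using ky_kv_span_add_sym_product[OF ky_kv_span_zero, of X \<xi> 1] by simp

lemma sum_sym_product_translations:
  "(\<Sum>r\<in>UNIV. sym_product (X r) (\<lambda>_ d. of_bool (d = r)) x a b c) = (X c x a b + X b x a c) / 2"
  by (simp add: sym_product_def sum.distrib add_divide_distrib sum_divide_distrib[symmetric]
      of_bool_def if_distrib[of "\<lambda>z. _ * z"] cong: if_cong)

lemma sum_rotation:
  assumes antisym: "\<And>r s. m r s = - m s r"
  shows "(\<Sum>r\<in>UNIV. \<Sum>s\<in>UNIV. m r s * rotation r s x c) = 2 * (\<Sum>s\<in>UNIV. m c s * x $ s)"
proof -
  have inner: "(\<Sum>s\<in>UNIV. m r s * rotation r s x c)
      = (if c = r then \<Sum>s\<in>UNIV. m r s * x $ s else 0) - m r c * x $ r" for r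
    by (cases "c = r") (simp_all add: rotation_def right_diff_distrib sum_subtractf sum_negf
        if_distrib[of "\<lambda>z. _ * z"] cong: if_cong)
  have "m r c * x $ r = - (m c r * x $ r)" for r
    using antisym[of r c] by simp
  then have "(\<Sum>r\<in>UNIV. m r c * x $ r) = - (\<Sum>s\<in>UNIV. m c s * x $ s)"
    by (simp add: sum_negf)
  then show ?thesis
    unfolding inner sum_subtractf by simp
qed

lemma ky_kv_span_translations:
  assumes "\<And>r. killing_yano (X r)"
  shows "ky_kv_span (\<lambda>x a b c. (X c x a b + X b x a c) / 2)"
proof -
  have "ky_kv_span (\<lambda>x a b c. \<Sum>r\<in>UNIV. sym_product (X r) (\<lambda>_ d. of_bool (d = r)) x a b c)"
    by (intro ky_kv_span_sum ky_kv_span_sym_product assms killing_vector_const) simp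
  then show ?thesis
    by (simp add: sum_sym_product_translations)
qed

lemma ky_kv_span_rotations:
  assumes "\<And>r s. killing_yano (X r s)" and antisym: "\<And>r s x a b. X r s x a b = - X s r x a b"
  shows "ky_kv_span (\<lambda>x a b c. \<Sum>s\<in>UNIV. (X c s x a b + X b s x a c) * x $ s)"
proof -
  have "ky_kv_span (\<lambda>x a b c. \<Sum>r\<in>UNIV. \<Sum>s\<in>UNIV. sym_product (X r s) (rotation r s) x a b c)"
    by (intro ky_kv_span_sum ky_kv_span_sym_product assms killing_vector_rotation) simp_all
  moreover have "(\<Sum>r\<in>UNIV. \<Sum>s\<in>UNIV. sym_product (X r s) (rotation r s) x a b c)
      = (\<Sum>s\<in>UNIV. (X c s x a b + X b s x a c) * x $ s)" for x a b c
  proof -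
    have "(\<Sum>r\<in>UNIV. \<Sum>s\<in>UNIV. sym_product (X r s) (rotation r s) x a b c)
        = ((\<Sum>r\<in>UNIV. \<Sum>s\<in>UNIV. X r s x a b * rotation r s x c)
          + (\<Sum>r\<in>UNIV. \<Sum>s\<in>UNIV. X r s x a c * rotation r s x b)) / 2"
      by (simp add: sym_product_def sum.distrib add_divide_distrib sum_divide_distrib)
    also have "\<dots> = (\<Sum>s\<in>UNIV. X c s x a b * x $ s) + (\<Sum>s\<in>UNIV. X b s x a c * x $ s)"
      using sum_rotation[of "\<lambda>r s. X r s x a b" x c, OF antisym]
        sum_rotation[of "\<lambda>r s. X r s x a c" x b, OF antisym]
      by simp
    finally show ?thesis
      by (simp add: distrib_right sum.distrib)
  qed
  ultimately show ?thesis
    by simp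
qed

lemma ky_kv_span_const_part:
  fixes C :: "idx \<Rightarrow> idx \<Rightarrow> idx \<Rightarrow> real"
  assumes sym: "\<And>a b c. C a b c = C a c b"
    and cyc: "\<And>a b c. C a b c + C b c a + C c a b = 0"
  shows "ky_kv_span (\<lambda>x a b c. C a b c)"
proof -
  have "ky_kv_span (\<lambda>x a b c. (const_ky_coeff C a b c + const_ky_coeff C a c b) / 2)"
    by (rule ky_kv_span_translations[of "\<lambda>r x a b. const_ky_coeff C a b r"])
      (intro killing_yano_const const_ky_coeff_antisym)
  then show ?thesis
    by (simp add: const_ky_coeff_sym_part[OF sym cyc])
qed

lemma ky_kv_span_linear_part:
  fixes P :: "idx \<Rightarrow> idx \<Rightarrow> idx \<Rightarrow> idx \<Rightarrow> real"
  assumes sym: "\<And>a b c d. P a b c d = P a c b d"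
    and cyc: "\<And>a b c d. P a b c d + P b c a d + P c a b d = 0"
    and killing: "\<And>a b c d. P a b c d + P a c d b + P a d b c = 0"
  shows "ky_kv_span (\<lambda>x a b c. \<Sum>s\<in>UNIV. P a b c s * x $ s)"
proof -
  have "ky_kv_span (\<lambda>x a b c. \<Sum>s\<in>UNIV. (lin_ky_coeff P a b c s / 2 + lin_ky_coeff P a c b s / 2) * x $ s)"
  proof (rule ky_kv_span_rotations[of "\<lambda>r s x a b. lin_ky_coeff P a b r s / 2"])
    show "killing_yano (\<lambda>x a b. lin_ky_coeff P a b r s / 2)" for r s
      by (rule killing_yano_const) (subst lin_ky_coeff_antisym(1), simp)
    show "lin_ky_coeff P a b r s / 2 = - (lin_ky_coeff P a b s r / 2)" for r s a b
      by (subst lin_ky_coeff_antisym(2), simp)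
  qed
  then show ?thesis
    by (simp add: add_divide_distrib[symmetric] lin_ky_coeff_sym_part[OF sym cyc killing])
qed

lemma sum_quadratic_form_transpose:
  "(\<Sum>j\<in>UNIV. \<Sum>k\<in>UNIV. f k j * (x $ j * x $ k)) = (\<Sum>j\<in>UNIV. \<Sum>k\<in>UNIV. f j k * (x $ j * (x::point) $ k))"
  by (subst sum.swap) (simp add: ac_simps)

lemma ky_kv_span_quadratic_part:
  fixes Q :: "idx \<Rightarrow> idx \<Rightarrow> idx \<Rightarrow> idx \<Rightarrow> idx \<Rightarrow> real"
  assumes sym1: "\<And>a b c d e. Q a b c d e = Q a c b d e"
    and sym2: "\<And>a b c d e. Q a b c d e = Q a b c e d"
    and cyc: "\<And>a b c d e. Q a b c d e + Q b c a d e + Q c a b d e = 0"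
    and killing: "\<And>a b c d e. Q a b c d e + Q a c d b e + Q a d b c e = 0"
  shows "ky_kv_span (\<lambda>x a b c. \<Sum>j\<in>UNIV. \<Sum>k\<in>UNIV. Q a b c j k * (x $ j * x $ k))"
proof -
  let ?R = "quad_ky_coeff Q"
  define S where "S x a b c = (\<Sum>j\<in>UNIV. \<Sum>k\<in>UNIV. ?R a b j c k * (x $ j * x $ k))" for x a b c
  have "ky_kv_span (\<lambda>x a b c. \<Sum>s\<in>UNIV.
      ((\<Sum>e\<in>UNIV. ?R a b e c s / 2 * x $ e) + (\<Sum>e\<in>UNIV. ?R a c e b s / 2 * x $ e)) * x $ s)"
  proof (rule ky_kv_span_rotations[of "\<lambda>r s x a b. \<Sum>e\<in>UNIV. ?R a b e r s / 2 * x $ e"])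
    show "killing_yano (\<lambda>x a b. \<Sum>e\<in>UNIV. ?R a b e r s / 2 * x $ e)" for r s
      by (rule killing_yano_linear) (subst quad_ky_coeff_antisym, simp)+
    show "(\<Sum>e\<in>UNIV. ?R a b e r s / 2 * x $ e) = - (\<Sum>e\<in>UNIV. ?R a b e s r / 2 * x $ e)" for r s x a b
      by (subst quad_ky_coeff_antisym(3)) (simp add: sum_negf)
  qed
  moreover have "(\<Sum>s\<in>UNIV. ((\<Sum>e\<in>UNIV. ?R a b e c s / 2 * x $ e) + (\<Sum>e\<in>UNIV. ?R a c e b s / 2 * x $ e)) * x $ s)
      = (S x a b c + S x a c b) / 2" for x a b c
    unfolding S_def
    by (subst (1 2) sum.swap) (simp add: distrib_left sum_distrib_left sum_distrib_right sum.distrib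
        add_divide_distrib sum_divide_distrib ac_simps)
  moreover have "(\<Sum>j\<in>UNIV. \<Sum>k\<in>UNIV. Q a b c j k * (x $ j * x $ k)) = (S x a b c + S x a c b) / 2"
    for x a b c
  proof -
    have "(\<Sum>j\<in>UNIV. \<Sum>k\<in>UNIV. Q a b c j k * (x $ j * x $ k))
        = (\<Sum>j\<in>UNIV. \<Sum>k\<in>UNIV. (?R a b k c j + ?R a b j c k + ?R a c k b j + ?R a c j b k) / 4 * (x $ j * x $ k))"
      by (simp add: quad_ky_coeff_sym_part[OF sym1 sym2 cyc killing])
    also have "\<dots> = ((\<Sum>j\<in>UNIV. \<Sum>k\<in>UNIV. ?R a b k c j * (x $ j * x $ k)) + S x a b c
        + (\<Sum>j\<in>UNIV. \<Sum>k\<in>UNIV. ?R a c k b j * (x $ j * x $ k)) + S x a c b) / 4"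
      unfolding S_def by (simp add: sum.distrib sum_divide_distrib distrib_right add_divide_distrib)
    finally show ?thesis
      unfolding S_def sum_quadratic_form_transpose[of "\<lambda>j k. ?R a b j c k"]
        sum_quadratic_form_transpose[of "\<lambda>j k. ?R a c j b k"] by simp
  qed
  ultimately show ?thesis
    by (simp only:)
qed

text \<open>The last assumption is T_{a(bc,d)} = 0 with the symmetry of T in (b,c) used to halve the
  six terms.\<close>

locale flat_mixed_killing =
  fixes T :: "point \<Rightarrow> idx \<Rightarrow> idx \<Rightarrow> idx \<Rightarrow> real"
  assumes smooth: "smooth_fun (\<lambda>x. T x a b c)"
    and sym: "T x a b c = T x a c b"
    and cyclic: "T x a b c + T x b c a + T x c a b = 0"
    and killing_eq: "pd d (\<lambda>y. T y a b c) x + pd b (\<lambda>y. T y a c d) x + pd c (\<lambda>y. T y a d b) x = 0"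
begin

lemma smooth_pd: "smooth_fun (pd d (\<lambda>y. T y a b c))" "smooth_fun (pd e (pd d (\<lambda>y. T y a b c)))"
  by (simp_all add: smooth_fun_pd smooth)

lemma pd_pd_commute: "pd e (pd d (\<lambda>y. T y a b c)) = pd d (pd e (\<lambda>y. T y a b c))"
  by (rule ext) (rule pd_commute[OF smooth])

lemma third_pd_eq_0: "pd i (pd j (pd k (\<lambda>y. T y a b c))) x = 0"
proof -
  define D where "D b c d e f = pd f (pd e (pd d (\<lambda>y. T y a b c))) x" for b c d e f
  have "D b c k j i = 0"
  proof (rule cyclic_sym_tensor_eq_0[of D])
    show "D b c d e f = D c b d e f" for b c d e f
      unfolding D_def by (subst sym) (rule refl)
    show "D b c d e f = D b c e d f" for b c d e f
      unfolding D_def by (simp add: pd_pd_commute)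
    show "D b c d e f = D b c d f e" for b c d e f
      unfolding D_def by (rule pd_commute) (simp add: smooth_pd)
    show "D b c d e f + D c d b e f + D d b c e f = 0" for b c d e f
      unfolding D_def
      by (intro pd_sum3_eq_0 smooth_pd) (intro pd_sum3_eq_0 smooth_pd killing_eq)
  qed
  then show ?thesis
    unfolding D_def .
qed

definition lin_coeff :: "idx \<Rightarrow> idx \<Rightarrow> idx \<Rightarrow> idx \<Rightarrow> real" where
  "lin_coeff a b c d = pd d (\<lambda>y. T y a b c) 0"

definition quad_coeff :: "idx \<Rightarrow> idx \<Rightarrow> idx \<Rightarrow> idx \<Rightarrow> idx \<Rightarrow> real" where
  "quad_coeff a b c d e = pd d (pd e (\<lambda>y. T y a b c)) 0 / 2"

lemma taylor_expansion:
  "T x a b c = T 0 a b c + (\<Sum>j\<in>UNIV. lin_coeff a b c j * x $ j)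
     + (\<Sum>j\<in>UNIV. \<Sum>k\<in>UNIV. quad_coeff a b c j k * (x $ j * x $ k))"
  using poly2_if_third_pd_eq_0[OF smooth third_pd_eq_0, of x]
  unfolding lin_coeff_def quad_coeff_def poly2_def .

lemma ky_kv_span_linear_term: "ky_kv_span (\<lambda>x a b c. \<Sum>j\<in>UNIV. lin_coeff a b c j * x $ j)"
proof (rule ky_kv_span_linear_part)
  show "lin_coeff a b c d = lin_coeff a c b d" for a b c d
    unfolding lin_coeff_def by (subst sym) (rule refl)
  show "lin_coeff a b c d + lin_coeff b c a d + lin_coeff c a b d = 0" for a b c d
    unfolding lin_coeff_def by (intro pd_sum3_eq_0 smooth cyclic)
  show "lin_coeff a b c d + lin_coeff a c d b + lin_coeff a d b c = 0" for a b c d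
    unfolding lin_coeff_def by (rule killing_eq)
qed

lemma ky_kv_span_quadratic_term:
  "ky_kv_span (\<lambda>x a b c. \<Sum>j\<in>UNIV. \<Sum>k\<in>UNIV. quad_coeff a b c j k * (x $ j * x $ k))"
proof (rule ky_kv_span_quadratic_part)
  show "quad_coeff a b c d e = quad_coeff a c b d e" for a b c d e
    unfolding quad_coeff_def by (subst sym) (rule refl)
  show "quad_coeff a b c d e = quad_coeff a b c e d" for a b c d e
    unfolding quad_coeff_def by (simp add: pd_pd_commute)
  show "quad_coeff a b c d e + quad_coeff b c a d e + quad_coeff c a b d e = 0" for a b c d e
    unfolding quad_coeff_def add_divide_distrib[symmetric]
    by (simp add: pd_sum3_eq_0 smooth_pd smooth cyclic)
  show "quad_coeff a b c d e + quad_coeff a c d b e + quad_coeff a d b c e = 0" for a b c d e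
    unfolding quad_coeff_def add_divide_distrib[symmetric] pd_pd_commute[of _ e]
    by (simp add: pd_sum3_eq_0 smooth_pd killing_eq)
qed

lemma ky_kv_span: "ky_kv_span T"
proof -
  have "ky_kv_span (\<lambda>x a b c. T 0 a b c + (\<Sum>j\<in>UNIV. lin_coeff a b c j * x $ j)
     + (\<Sum>j\<in>UNIV. \<Sum>k\<in>UNIV. quad_coeff a b c j k * (x $ j * x $ k)))"
    by (intro ky_kv_span_add ky_kv_span_const_part ky_kv_span_linear_term ky_kv_span_quadratic_term
        sym cyclic)
  then show ?thesis
    by (subst (asm) taylor_expansion[symmetric])
qed

end

lemma flat_mixed_killing_if_mixed_killing:
  assumes "mixed_killing T"
  shows "flat_mixed_killing T"
proof -
  obtain N where smooth: "\<And>a b c. smooth_fun (\<lambda>x. T x a b c)"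
    and antisym: "\<And>x a b c. N x a b c = - N x b a c"
    and T_N: "\<And>x a b c. T x a b c = (N x a b c + N x a c b) / 2"
    and killing: "\<And>x a b c d. (pd d (\<lambda>y. T y a b c) x + pd b (\<lambda>y. T y a c d) x
        + pd c (\<lambda>y. T y a d b) x + pd d (\<lambda>y. T y a c b) x + pd c (\<lambda>y. T y a b d) x
        + pd b (\<lambda>y. T y a d c) x) / 6 = 0"
    using assms unfolding mixed_killing_def smooth3_def by blast
  have sym: "T x a b c = T x a c b" for x a b c
    using T_N[of x a b c] T_N[of x a c b] by simp
  then have sym_fun: "(\<lambda>y. T y a c b) = (\<lambda>y. T y a b c)" for a b c
    by simp
  show ?thesis
  proof
    show "smooth_fun (\<lambda>x. T x a b c)" for a b c
      by (rule smooth)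
    show "T x a b c = T x a c b" for x a b c
      by (rule sym)
    show "T x a b c + T x b c a + T x c a b = 0" for x a b c
      using T_N[of x a b c] T_N[of x b c a] T_N[of x c a b]
        antisym[of x b a c] antisym[of x c a b] antisym[of x c b a]
      by (simp add: field_simps)
    show "pd d (\<lambda>y. T y a b c) x + pd b (\<lambda>y. T y a c d) x + pd c (\<lambda>y. T y a d b) x = 0" for x a b c d
      using killing[of d a b c x] unfolding sym_fun by simp
  qed
qed

theorem mainTheorem18:
  fixes T :: "point \<Rightarrow> idx \<Rightarrow> idx \<Rightarrow> idx \<Rightarrow> real"
  assumes "mixed_killing T"
  shows "\<exists>(m::nat) (c::nat \<Rightarrow> real) (X::nat \<Rightarrow> point \<Rightarrow> idx \<Rightarrow> idx \<Rightarrow> real)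
            (\<xi>::nat \<Rightarrow> point \<Rightarrow> idx \<Rightarrow> real).
           (\<forall>i<m. killing_yano (X i) \<and> killing_vector (\<xi> i)) \<and>
           (\<forall>x a b g. T x a b g =
              (\<Sum>i<m. c i * ((X i x a b * \<xi> i x g + X i x a g * \<xi> i x b) / 2)))"
  using flat_mixed_killing.ky_kv_span[OF flat_mixed_killing_if_mixed_killing[OF assms]]
  unfolding ky_kv_span_def sym_product_def .

end
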